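(* Let $k=n^{1/6}$ (assumed to be an integer power of $2$), let $D=\{x\in\{0,\ldots,k-1\}^n:(\sum_i x_i)\bmod k=0\}$ and for $x\in D$ let $F(x)=\frac1k\big[(\sum_{i=1}^n x_i)\bmod 2k\big]\in\{0,1\}$. There is a constant $C$ such that every rectangle $R=A_1\times\cdots\times A_n$ with $A_i\subseteq\{0,\ldots,k-1\}$ for which at least $n^{5/6}$ of the sets $A_i$ have size at least $2$ has bias at most $C\,n^{-1/6}$.
   Context: A rectangle $R$ has bias at most $\delta$ if $|F^{-1}(1)\cap D\cap R|\le(1+\delta)|F^{-1}(0)\cap D\cap R|$ and $|F^{-1}(0)\cap D\cap R|\le(1+\delta)|F^{-1}(1)\cap D\cap R|$. *)

theory Defs
  imports Complex_Main "HOL-Library.FuncSet"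
begin

definition cube :: "nat \<Rightarrow> nat \<Rightarrow> (nat \<Rightarrow> nat) set" where
  "cube n k = PiE {0..<n} (\<lambda>_. {0..<k})"

definition domD :: "nat \<Rightarrow> nat \<Rightarrow> (nat \<Rightarrow> nat) set" where
  "domD n k = {x \<in> cube n k. (\<Sum>i<n. x i) mod k = 0}"

definition funF :: "nat \<Rightarrow> nat \<Rightarrow> (nat \<Rightarrow> nat) \<Rightarrow> nat" where
  "funF n k x = ((\<Sum>i<n. x i) mod (2 * k)) div k"

definition rect :: "nat \<Rightarrow> (nat \<Rightarrow> nat set) \<Rightarrow> (nat \<Rightarrow> nat) set" where
  "rect n A = PiE {0..<n} A"

definition bias_at_most ::
  "((nat \<Rightarrow> nat) \<Rightarrow> nat) \<Rightarrow> (nat \<Rightarrow> nat) set \<Rightarrow> (nat \<Rightarrow> nat) set \<Rightarrow> real \<Rightarrow> bool" where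
  "bias_at_most F D R \<delta> \<longleftrightarrow>
     real (card (F -` {1} \<inter> D \<inter> R)) \<le> (1 + \<delta>) * real (card (F -` {0} \<inter> D \<inter> R)) \<and>
     real (card (F -` {0} \<inter> D \<inter> R)) \<le> (1 + \<delta>) * real (card (F -` {1} \<inter> D \<inter> R))"

end

theory Submission
  imports Defs
begin

text \<open>
  Let \<open>N r\<close> be the number of points of the rectangle whose coordinate sum is \<open>r\<close> modulo \<open>2k\<close>.
  The two level sets of \<open>F\<close> in \<open>D\<close> have sizes \<open>N k\<close> and \<open>N 0 = N (2k)\<close>, so it suffices to show
  \<open>N r \<le> (1 + 20/k) N (r + k)\<close> for all \<open>r\<close>. This inequality survives adding further coordinates
  (the counts convolve), and a coordinate set with three or more elements is, up to a constant
  factor, the average of its two-element subsets; so by induction on the total size of the sets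
  we may assume all sets have at most two elements. By pigeonhole \<open>k\<^sup>4\<close> of the at least
  \<open>k\<^sup>5\<close> two-element sets \<open>{a, a + d}\<close> share the same difference \<open>d\<close>; restricted to these
  coordinates, \<open>N r = \<Sum>b. (M choose b) [2k dvd r - s - d b]\<close> with \<open>M = k\<^sup>4\<close> and \<open>s\<close> the sum
  of the smaller elements. Writing \<open>d = 2\<^sup>v od\<close> with \<open>od\<close>
  odd, the relevant \<open>b\<close> run through an arithmetic progression of step \<open>h = 2\<^sup>j\<^sup>-\<^sup>v\<close> on which
  membership in \<open>N r\<close> and \<open>N (r + k)\<close> alternates. Hence \<open>N r + N (r + k)\<close> is a sum of binomial
  coefficients along a progression, at least \<open>2\<^sup>M / k - (M choose M/2)\<close>, while \<open>N r - N (r + k)\<close>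
  is an alternating sum of a unimodal sequence, at most \<open>M choose M/2\<close> in absolute value.
  Since \<open>(M choose M/2) \<approx> 2\<^sup>M / k\<^sup>2\<close>, the ratio is \<open>1 + O(1/k)\<close>.
\<close>

lemma alternating_sum_antimono_bounds:
  fixes g :: "nat \<Rightarrow> real"
  assumes "\<And>i. 0 \<le> g i" and "\<And>i j. i \<le> j \<Longrightarrow> g j \<le> g i"
  shows "0 \<le> (\<Sum>i<N. (-1)^i * g i) \<and> (\<Sum>i<N. (-1)^i * g i) \<le> g 0"
  using assms
proof (induction N arbitrary: g)
  case 0
  then show ?case by simp
next
  case (Suc N)
  have "0 \<le> (\<Sum>i<N. (-1)^i * g (Suc i)) \<and> (\<Sum>i<N. (-1)^i * g (Suc i)) \<le> g 1"
    using Suc.IH[of "\<lambda>i. g (Suc i)"] Suc.prems by auto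
  moreover have "(\<Sum>i<Suc N. (-1)^i * g i) = g 0 - (\<Sum>i<N. (-1)^i * g (Suc i))"
    by (subst sum.lessThan_Suc_shift) (simp add: sum_negf)
  ultimately show ?case
    using Suc.prems(2)[of 0 1] by auto
qed

lemma alternating_sum_mono_bounds:
  fixes g :: "nat \<Rightarrow> real"
  assumes "\<And>i. 0 \<le> g i" and "\<And>i j. i \<le> j \<Longrightarrow> j \<le> q \<Longrightarrow> g i \<le> g j"
  shows "0 \<le> (-1)^q * (\<Sum>i\<le>q. (-1)^i * g i) \<and> (-1)^q * (\<Sum>i\<le>q. (-1)^i * g i) \<le> g q"
  using assms(2)
proof (induction q)
  case 0
  then show ?case using assms(1)[of 0] by simp
next
  case (Suc q)
  have "(-1)^Suc q * (\<Sum>i\<le>Suc q. (-1)^i * g i) = g (Suc q) - (-1)^q * (\<Sum>i\<le>q. (-1)^i * g i)"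
    by (simp add: algebra_simps)
  moreover have "0 \<le> (-1)^q * (\<Sum>i\<le>q. (-1)^i * g i) \<and> (-1)^q * (\<Sum>i\<le>q. (-1)^i * g i) \<le> g q"
    using Suc by simp
  ultimately show ?case
    using Suc.prems[of q "Suc q"] by auto
qed

lemma abs_alternating_sum_unimodal_le:
  fixes g :: "nat \<Rightarrow> real"
  assumes nonneg: "\<And>i. 0 \<le> g i" and bounded: "\<And>i. g i \<le> B"
    and mono: "\<And>i j. i \<le> j \<Longrightarrow> j < q \<Longrightarrow> g i \<le> g j"
    and antimono: "\<And>i j. q \<le> i \<Longrightarrow> i \<le> j \<Longrightarrow> g j \<le> g i"
    and "q \<le> N"
  shows "\<bar>\<Sum>i<N. (-1)^i * g i\<bar> \<le> B"
proof -
  define X where "X = (\<Sum>i<q. (-1)^i * g i)"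
  define Y where "Y = (\<Sum>i\<in>{q..<N}. (-1)^i * g i)"
  have "(\<Sum>i<N. (-1)^i * g i) = X + Y"
    unfolding X_def Y_def using \<open>q \<le> N\<close>
    by (metis atLeast0LessThan sum.atLeastLessThan_concat zero_le)
  have Y: "0 \<le> (-1)^q * Y \<and> (-1)^q * Y \<le> B"
  proof -
    have "Y = (\<Sum>i<N-q. (-1)^(i+q) * g (i+q))"
      unfolding Y_def using sum.shift_bounds_nat_ivl[of "\<lambda>i. (-1)^i * g i" 0 q "N-q"] \<open>q \<le> N\<close>
      by (simp add: atLeast0LessThan)
    then have "(-1)^q * Y = (\<Sum>i<N-q. (-1)^i * g (q + i))"
      by (simp add: sum_distrib_left power_add algebra_simps)
    then show ?thesis
      using alternating_sum_antimono_bounds[of "\<lambda>i. g (q + i)" "N-q"] nonneg antimono bounded[of q]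
      by auto
  qed
  have X: "0 \<le> - ((-1)^q * X) \<and> - ((-1)^q * X) \<le> B"
  proof (cases q)
    case 0
    then show ?thesis using bounded[of 0] nonneg[of 0] by (simp add: X_def)
  next
    case (Suc p)
    then have "- ((-1)^q * X) = (-1)^p * (\<Sum>i\<le>p. (-1)^i * g i)"
      by (simp add: X_def lessThan_Suc_atMost)
    then show ?thesis
      using alternating_sum_mono_bounds[of g p] nonneg mono bounded[of p] Suc by auto
  qed
  have "\<bar>X + Y\<bar> = \<bar>(-1)^q * X + (-1)^q * Y\<bar>"
    by (simp add: abs_mult flip: distrib_left)
  also have "\<dots> \<le> B" using X Y by linarith
  finally show ?thesis using \<open>(\<Sum>i<N. (-1)^i * g i) = X + Y\<close> by simp
qed

lemma central_binomial_Suc: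
  "(2 * Suc n choose Suc n) * Suc n = 2 * (2 * n + 1) * (2 * n choose n)"
  by (metis (lifting) ext Suc_eq_plus1 Suc_times_binomial_add Suc_times_binomial_eq
      add_Suc_right add_Suc_shift mult.commute mult.left_commute mult_2)

lemma central_binomial_square_le: "real (2 * n choose n)^2 * (3 * n + 1) \<le> 16^n"
proof (induction n)
  case 0
  then show ?case by simp
next
  case (Suc n)
  define c where "c = real (2 * n choose n)"
  define c' where "c' = real (2 * Suc n choose Suc n)"
  have rec: "c' * (real n + 1) = 2 * (2 * real n + 1) * c"
  proof -
    have "c' * real (Suc n) = real (2 * (2 * n + 1)) * c"
      unfolding c_def c'_def of_nat_mult[symmetric] central_binomial_Suc ..
    then show ?thesis by (simp add: algebra_simps)
  qed
  have "(real n + 1)^2 * (c'^2 * (3 * n + 4)) = (c' * (real n + 1))^2 * (3 * n + 4)"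
    by (simp add: power_mult_distrib)
  also have "\<dots> = 4 * c^2 * ((2 * n + 1)^2 * (3 * n + 4))"
    unfolding rec by (simp add: power_mult_distrib power2_eq_square algebra_simps)
  also have "\<dots> \<le> 4 * c^2 * (4 * (real n + 1)^2 * (3 * n + 1))"
    by (intro mult_left_mono) (simp_all add: power2_eq_square algebra_simps)
  also have "\<dots> = 16 * (real n + 1)^2 * (c^2 * (3 * n + 1))"
    by (simp add: algebra_simps)
  also have "\<dots> \<le> 16 * (real n + 1)^2 * 16^n"
    using Suc.IH unfolding c_def by (intro mult_left_mono) simp_all
  finally have "c'^2 * (3 * n + 4) \<le> 16^Suc n"
    by (simp add: mult.left_commute[of "(real n + 1)^2"])
  then show ?case
    unfolding c'_def by (simp add: add.commute)
qed

text \<open>This is where the constant 20 of the bias bound comes from.\<close>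

lemma central_binomial_fourth_power_le:
  assumes "even K" "2 \<le> K"
  shows "real (K^4 choose (K^4 div 2)) * (real K^2 + 20 * real K) \<le> 10 * 2^(K^4)"
proof -
  define n where "n = K^4 div 2"
  define m where "m = real (K^4 choose (K^4 div 2))"
  define x where "x = real K"
  have K4: "K^4 = 2 * n"
    unfolding n_def using \<open>even K\<close> by simp
  have "x \<ge> 2" and "real n = x^4 / 2"
    using assms K4 unfolding x_def by (simp_all flip: of_nat_power)
  have "40 * x + 400 \<le> 149 * x^2"
    using \<open>x \<ge> 2\<close> mult_right_mono[OF \<open>x \<ge> 2\<close>, of x] unfolding power2_eq_square by linarith
  then have "x^2 * (40 * x + 400) \<le> x^2 * (149 * x^2)"
    by (intro mult_left_mono) auto
  then have "(x^2 + 20 * x)^2 \<le> 100 * (3 * real n + 1)"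
    unfolding \<open>real n = x^4 / 2\<close> by (simp add: power2_eq_square power4_eq_xxxx algebra_simps)
  then have "(m * (x^2 + 20 * x))^2 \<le> m^2 * (100 * (3 * real n + 1))"
    by (simp add: power_mult_distrib mult_left_mono)
  also have "\<dots> = 100 * (m^2 * (3 * real n + 1))"
    by simp
  also have "\<dots> \<le> 100 * 16^n"
    using central_binomial_square_le[of n] unfolding m_def K4 by (simp add: add.commute)
  also have "\<dots> = (10 * 2^(K^4))^2"
    unfolding K4 by (simp add: power_mult_distrib power_mult[symmetric] mult.commute[of _ 2] power_mult)
  finally have "m * (x^2 + 20 * x) \<le> 10 * 2^(K^4)"
    by (rule power2_le_imp_le) simp
  then show ?thesis unfolding m_def x_def .
qed

text \<open>For \<open>s < h\<close> these are the sum and the alternating sum of the coefficients \<open>M choose b\<close>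
  over \<open>b \<equiv> s (mod h)\<close>; indices beyond \<open>M\<close> contribute zero.\<close>

definition binomial_progression_sum :: "nat \<Rightarrow> nat \<Rightarrow> nat \<Rightarrow> real" where
  "binomial_progression_sum M h s = (\<Sum>i<M+1. real (M choose (s + i * h)))"

definition binomial_progression_altsum :: "nat \<Rightarrow> nat \<Rightarrow> nat \<Rightarrow> real" where
  "binomial_progression_altsum M h s = (\<Sum>i<M+1. (-1)^i * real (M choose (s + i * h)))"

lemma sum_binomial_progression_truncate:
  fixes w :: "nat \<Rightarrow> real"
  assumes "1 \<le> h" "M + 1 \<le> T"
  shows "(\<Sum>i<T. w i * real (M choose (s + i * h))) = (\<Sum>i<M+1. w i * real (M choose (s + i * h)))"
proof (rule sum.mono_neutral_right)
  show "\<forall>i\<in>{..<T} - {..<M+1}. w i * real (M choose (s + i * h)) = 0"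
  proof
    fix i assume "i \<in> {..<T} - {..<M+1}"
    then have "M + 1 \<le> i * h"
      using mult_mono[of "M + 1" i 1 h] assms(1) by auto
    then show "w i * real (M choose (s + i * h)) = 0" by simp
  qed
qed (use assms(2) in auto)

lemma sum_binomial_progression_in_pairs:
  fixes w :: "nat \<Rightarrow> real"
  assumes "1 \<le> h"
  shows "(\<Sum>i<M+1. w i * real (M choose (s + i * h))) =
      (\<Sum>i<M+1. w (2 * i) * real (M choose (s + i * (2 * h)))
        + w (2 * i + 1) * real (M choose (s + h + i * (2 * h))))"
proof -
  have "(\<Sum>i<M+1. w i * real (M choose (s + i * h))) = (\<Sum>i\<le>Suc (2 * M). w i * real (M choose (s + i * h)))"
    using sum_binomial_progression_truncate[OF assms, where T="2 * (M+1)"]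
    by (simp add: lessThan_Suc_atMost[symmetric])
  also have "\<dots> = (\<Sum>i\<le>M. w (2 * i) * real (M choose (s + 2 * i * h))
      + w (Suc (2 * i)) * real (M choose (s + Suc (2 * i) * h)))"
    by (rule sum.in_pairs_0)
  finally show ?thesis
    by (simp add: lessThan_Suc_atMost algebra_simps)
qed

lemma binomial_progression_sum_split:
  assumes "1 \<le> h"
  shows "binomial_progression_sum M h s =
      binomial_progression_sum M (2 * h) s + binomial_progression_sum M (2 * h) (s + h)"
  using sum_binomial_progression_in_pairs[OF assms, where w="\<lambda>_. 1"]
  by (simp add: binomial_progression_sum_def sum.distrib)

lemma binomial_progression_altsum_split:
  assumes "1 \<le> h"
  shows "binomial_progression_altsum M h s =
      binomial_progression_sum M (2 * h) s - binomial_progression_sum M (2 * h) (s + h)"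
  using sum_binomial_progression_in_pairs[OF assms, where w="\<lambda>i. (-1)^i"]
  by (simp add: binomial_progression_sum_def binomial_progression_altsum_def sum_subtractf)

lemma abs_binomial_progression_altsum_le:
  assumes "1 \<le> h"
  shows "\<bar>binomial_progression_altsum M h s\<bar> \<le> real (M choose (M div 2))"
proof -
  define q where "q = (LEAST i. M div 2 < s + i * h)"
  have "M div 2 < s + (M + 1) * h"
    using mult_mono[of "M + 1" "M + 1" 1 h] assms by simp
  then have "q \<le> M + 1"
    unfolding q_def by (rule Least_le)
  have below: "s + j * h \<le> M div 2" if "j < q" for j
    using not_less_Least[of j "\<lambda>i. M div 2 < s + i * h"] that unfolding q_def by simp
  have above: "M div 2 \<le> s + i * h" if "q \<le> i" for i
  proof -
    have "M div 2 < s + q * h"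
      unfolding q_def by (rule LeastI) fact
    then show ?thesis using mult_le_mono1[OF that, of h] by linarith
  qed
  show ?thesis
    unfolding binomial_progression_altsum_def
  proof (rule abs_alternating_sum_unimodal_le[OF _ _ _ _ \<open>q \<le> M + 1\<close>])
    fix i j :: nat
    assume "i \<le> j" "j < q"
    then show "real (M choose (s + i * h)) \<le> real (M choose (s + j * h))"
      using below[of j] by (simp add: binomial_mono mult_le_mono1)
  next
    fix i j :: nat
    assume "q \<le> i" "i \<le> j"
    then show "real (M choose (s + j * h)) \<le> real (M choose (s + i * h))"
      using above[of i] by (cases "s + j * h \<le> M") (simp_all add: binomial_antimono binomial_eq_0 mult_le_mono1)
  qed (simp_all add: binomial_maximum)
qed

lemma binomial_progression_sum_lower_bound:
  "s < 2^e \<Longrightarrow> 2^M / 2^e - real (M choose (M div 2)) \<le> binomial_progression_sum M (2^e) s"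
proof (induction e arbitrary: s)
  case 0
  then show ?case
    by (simp add: binomial_progression_sum_def lessThan_Suc_atMost choose_row_sum flip: of_nat_sum)
next
  case (Suc e)
  define h :: nat where "h = 2^e"
  have "1 \<le> h" unfolding h_def by simp
  define m where "m = real (M choose (M div 2))"
  have split_bound: "2^M / (2 * h) - m \<le> binomial_progression_sum M (2 * h) s'"
    if "2^M / h - m \<le> binomial_progression_sum M h s''" and "s' = s'' \<or> s' = s'' + h"
    for s' s''
  proof -
    have "\<bar>binomial_progression_altsum M h s''\<bar> \<le> m"
      unfolding m_def by (rule abs_binomial_progression_altsum_le[OF \<open>1 \<le> h\<close>])
    then have "binomial_progression_sum M h s'' - m \<le> 2 * binomial_progression_sum M (2 * h) s'"
      using binomial_progression_sum_split[OF \<open>1 \<le> h\<close>, of M s'']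
        binomial_progression_altsum_split[OF \<open>1 \<le> h\<close>, of M s''] that(2) \<open>1 \<le> h\<close>
      by auto
    moreover have "(2::real)^M / (2 * h) = 2^M / h / 2"
      by simp
    ultimately show ?thesis
      using that(1) by linarith
  qed
  show ?case
  proof (cases "s < h")
    case True
    then show ?thesis
      using split_bound[of s s] Suc.IH[of s] unfolding h_def m_def by simp
  next
    case False
    then show ?thesis
      using split_bound[of "s - h" s] Suc.IH[of "s - h"] Suc.prems unfolding h_def m_def by simp
  qed
qed

text \<open>The number of points of \<open>{0, d}\<^sup>M\<close> whose coordinate sum is congruent to \<open>r\<close> modulo \<open>W\<close>.\<close>

definition binomial_residue_count :: "nat \<Rightarrow> nat \<Rightarrow> nat \<Rightarrow> int \<Rightarrow> real" where
  "binomial_residue_count W d M r = (\<Sum>b\<le>M. real (M choose b) * of_bool (int W dvd r - int (d * b)))"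

lemma binomial_residue_count_0: "binomial_residue_count W d 0 r = of_bool (int W dvd r)"
  by (simp add: binomial_residue_count_def)

lemma binomial_residue_count_Suc:
  "binomial_residue_count W d (Suc M) r = binomial_residue_count W d M r + binomial_residue_count W d M (r - int d)"
proof -
  define \<phi> where "\<phi> b = (of_bool (int W dvd r - int (d * b)) :: real)" for b
  have shift: "of_bool (int W dvd r - int d - int (d * b)) = \<phi> (Suc b)" for b
    unfolding \<phi>_def by (simp add: algebra_simps)
  have "binomial_residue_count W d (Suc M) r = \<phi> 0 + (\<Sum>b\<le>M. real (Suc M choose Suc b) * \<phi> (Suc b))"
    unfolding binomial_residue_count_def \<phi>_def[symmetric] by (subst sum.atMost_Suc_shift) simp
  also have "\<dots> = \<phi> 0 + (\<Sum>b\<le>M. real (M choose Suc b) * \<phi> (Suc b)) + (\<Sum>b\<le>M. real (M choose b) * \<phi> (Suc b))"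
    by (simp add: algebra_simps sum.distrib)
  also have "\<phi> 0 + (\<Sum>b\<le>M. real (M choose Suc b) * \<phi> (Suc b)) = (\<Sum>b\<le>Suc M. real (M choose b) * \<phi> b)"
    by (subst sum.atMost_Suc_shift) simp
  also have "\<dots> = binomial_residue_count W d M r"
    unfolding binomial_residue_count_def \<phi>_def by simp
  finally show ?thesis
    unfolding binomial_residue_count_def shift by simp
qed

lemma sum_binomial_residue_class:
  fixes w :: "nat \<Rightarrow> real"
  assumes "b0 < h"
  shows "(\<Sum>b\<le>M. real (M choose b) * of_bool (b mod h = b0) * w (b div h)) =
      (\<Sum>i<M+1. w i * real (M choose (b0 + i * h)))"
proof -
  have "1 \<le> h" using assms by simp
  have "(\<Sum>b\<le>M. real (M choose b) * of_bool (b mod h = b0) * w (b div h)) =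
      (\<Sum>b\<in>{b. b \<le> M \<and> b mod h = b0}. real (M choose b) * w (b div h))"
    by (rule sum.mono_neutral_cong_right) auto
  also have "\<dots> = (\<Sum>i\<in>{i. b0 + i * h \<le> M}. w i * real (M choose (b0 + i * h)))"
    by (rule sum.reindex_bij_witness[where i="\<lambda>i. b0 + i * h" and j="\<lambda>b. b div h"])
      (use assms in \<open>auto simp: mult.commute[of _ h]\<close>)
  also have "\<dots> = (\<Sum>i<M+1. w i * real (M choose (b0 + i * h)))"
  proof (rule sum.mono_neutral_left)
    show "{i. b0 + i * h \<le> M} \<subseteq> {..<M+1}"
    proof
      fix i assume "i \<in> {i. b0 + i * h \<le> M}"
      moreover have "i \<le> i * h" by (metis \<open>1 \<le> h\<close> mult.right_neutral mult_le_mono2)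
      ultimately show "i \<in> {..<M+1}" unfolding mem_Collect_eq lessThan_iff by linarith
    qed
  qed auto
  finally show ?thesis .
qed

lemma mult_eq_mult_imp_dvd_iff:
  fixes x :: int
  assumes "d * h = od * K" "coprime h od" "0 < K" "0 < h"
  shows "int K dvd int d * x \<longleftrightarrow> int h dvd x"
proof -
  have "int K dvd int d * x \<longleftrightarrow> int K * int h dvd int d * x * int h"
    using \<open>0 < h\<close> by simp
  also have "int d * x * int h = int K * (int od * x)"
    using arg_cong[OF assms(1), of int] by (simp add: algebra_simps)
  also have "int K * int h dvd int K * (int od * x) \<longleftrightarrow> int h dvd int od * x"
    using \<open>0 < K\<close> by simp
  also have "\<dots> \<longleftrightarrow> int h dvd x"
    using assms(2) by (simp add: coprime_dvd_mult_right_iff)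
  finally show ?thesis .
qed

lemma dvd_sub_mult_mod_iff:
  fixes r :: int
  assumes "d * h = od * K"
  shows "int K dvd r - int (d * b) \<longleftrightarrow> int K dvd r - int (d * (b mod h))"
proof -
  have "d * b = d * (b mod h + h * (b div h))"
    by simp
  also have "\<dots> = d * (b mod h) + (d * h) * (b div h)"
    by (simp only: distrib_left mult.assoc)
  finally have "r - int (d * (b mod h)) = r - int (d * b) + int (od * (b div h)) * int K"
    using assms by (simp add: algebra_simps)
  then show ?thesis
    by (simp only: dvd_add_times_triv_right_iff)
qed

lemma dvd_sub_mult_iff_mod_eq:
  fixes r t :: int
  assumes "d * h = od * K" "coprime h od" "0 < K" "b0 < h" "r - int (d * b0) = int K * t"
  shows "int K dvd r - int (d * b) \<longleftrightarrow> b mod h = b0"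
proof -
  have "0 < h"
    using \<open>b0 < h\<close> by simp
  have "r = int K * t + int d * int b0"
    using assms(5) by simp
  then have "r - int (d * (b mod h)) = int d * (int b0 - int (b mod h)) + t * int K"
    by (simp add: algebra_simps)
  then have "int K dvd r - int (d * b) \<longleftrightarrow> int K dvd int d * (int b0 - int (b mod h))"
    unfolding dvd_sub_mult_mod_iff[OF assms(1), of r b] by (simp only: dvd_add_times_triv_right_iff)
  also have "\<dots> \<longleftrightarrow> int b0 mod int h = int (b mod h) mod int h"
    unfolding mult_eq_mult_imp_dvd_iff[OF assms(1-3) \<open>0 < h\<close>] by (rule mod_eq_dvd_iff[symmetric])
  also have "\<dots> \<longleftrightarrow> b mod h = b0"
    using \<open>b0 < h\<close> by (auto simp flip: of_nat_mod)
  finally show ?thesis .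
qed

text \<open>Along the residue class of \<open>b0\<close> modulo \<open>h\<close> the quotient \<open>(r - d * b) div K\<close> changes parity
  at each step, because \<open>d * h = od * K\<close> with \<open>od\<close> odd.\<close>

lemma half_shift_indicators:
  fixes r t :: int
  assumes "d * h = od * K" "odd od" "coprime h od" "0 < K"
    and "b0 < h" "r - int (d * b0) = int K * t"
  shows "of_bool (int (2 * K) dvd r - int (d * b)) + of_bool (int (2 * K) dvd r + int K - int (d * b))
      = (of_bool (b mod h = b0) :: real)"
    and "of_bool (int (2 * K) dvd r - int (d * b)) - of_bool (int (2 * K) dvd r + int K - int (d * b))
      = (if even t then 1 else -1) * (-1)^(b div h) * (of_bool (b mod h = b0) :: real)"
proof -
  define i where "i = b div h"
  have K_dvd_iff: "int K dvd r - int (d * b) \<longleftrightarrow> b mod h = b0"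
    using assms(1,3-6) by (rule dvd_sub_mult_iff_mod_eq)
  have K_dvd_2K: "int K dvd z" if "int (2 * K) dvd z" for z
    using that unfolding of_nat_mult by (rule dvd_mult_right)
  have "of_bool (int (2 * K) dvd r - int (d * b)) + of_bool (int (2 * K) dvd r + int K - int (d * b))
      = (of_bool (b mod h = b0) :: real) \<and>
    of_bool (int (2 * K) dvd r - int (d * b)) - of_bool (int (2 * K) dvd r + int K - int (d * b))
      = (if even t then 1 else -1) * (-1)^i * (of_bool (b mod h = b0) :: real)"
  proof (cases "b mod h = b0")
    case True
    have "d * b = d * (b mod h + h * i)"
      unfolding i_def by simp
    also have "\<dots> = d * b0 + od * i * K"
      using True assms(1) by (simp add: algebra_simps)
    finally have "r - int (d * b) = int K * (t - int od * int i)"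
      using assms(6) by (simp add: algebra_simps)
    moreover have "r + int K - int (d * b) = int K * (t - int od * int i + 1)"
      using calculation by (simp add: algebra_simps)
    ultimately show ?thesis
      using True \<open>odd od\<close> \<open>0 < K\<close> by simp
  next
    case False
    have "int K dvd r + int K - int (d * b) \<longleftrightarrow> int K dvd r - int (d * b)"
      by (simp only: diff_add_eq[symmetric] dvd_add_triv_right_iff)
    then have "\<not> int K dvd r - int (d * b)" "\<not> int K dvd r + int K - int (d * b)"
      using False K_dvd_iff by simp_all
    then show ?thesis
      using False K_dvd_2K by auto
  qed
  then show "of_bool (int (2 * K) dvd r - int (d * b)) + of_bool (int (2 * K) dvd r + int K - int (d * b))
      = (of_bool (b mod h = b0) :: real)"
    and "of_bool (int (2 * K) dvd r - int (d * b)) - of_bool (int (2 * K) dvd r + int K - int (d * b))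
      = (if even t then 1 else -1) * (-1)^(b div h) * (of_bool (b mod h = b0) :: real)"
    unfolding i_def by auto
qed

lemma binomial_residue_count_nonneg: "0 \<le> binomial_residue_count W d M r"
  unfolding binomial_residue_count_def by (intro sum_nonneg) simp

lemma binomial_residue_count_eq_0:
  fixes r :: int
  assumes "d * h = od * K" "0 < h" "\<forall>b0<h. \<not> int K dvd r - int (d * b0)"
  shows "binomial_residue_count (2 * K) d M r = 0"
proof -
  have "\<not> int (2 * K) dvd r - int (d * b)" for b
  proof
    assume "int (2 * K) dvd r - int (d * b)"
    then have "int K dvd r - int (d * b)"
      by (metis dvd_mult_right of_nat_mult)
    then have "int K dvd r - int (d * (b mod h))"
      using dvd_sub_mult_mod_iff[OF assms(1)] by blast
    then show False
      using assms(2,3) by simp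
  qed
  then show ?thesis
    by (simp add: binomial_residue_count_def)
qed

lemma binomial_residue_count_half_shift:
  fixes r :: int
  assumes "d * h = od * K" "odd od" "coprime h od" "0 < K" "0 < h"
  obtains "binomial_residue_count (2 * K) d M r = 0"
  | b0 where "b0 < h"
    "binomial_residue_count (2 * K) d M r + binomial_residue_count (2 * K) d M (r + int K)
      = binomial_progression_sum M h b0"
    "\<bar>binomial_residue_count (2 * K) d M r - binomial_residue_count (2 * K) d M (r + int K)\<bar>
      = \<bar>binomial_progression_altsum M h b0\<bar>"
proof (cases "\<exists>b0<h. int K dvd r - int (d * b0)")
  case True
  then obtain b0 t where "b0 < h" "r - int (d * b0) = int K * t"
    unfolding dvd_def by blast
  note indicators = half_shift_indicators[OF assms(1-4) this]
  have "binomial_residue_count (2 * K) d M r + binomial_residue_count (2 * K) d M (r + int K)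
      = (\<Sum>b\<le>M. real (M choose b) * of_bool (b mod h = b0) * 1)"
    unfolding binomial_residue_count_def sum.distrib[symmetric]
    by (intro sum.cong refl) (simp only: distrib_left[symmetric] indicators(1) mult_1_right)
  also have "\<dots> = binomial_progression_sum M h b0"
    using sum_binomial_residue_class[OF \<open>b0 < h\<close>, where w="\<lambda>_. 1" and M=M]
    unfolding binomial_progression_sum_def by simp
  finally have sum: "binomial_residue_count (2 * K) d M r + binomial_residue_count (2 * K) d M (r + int K)
      = binomial_progression_sum M h b0" .
  have "binomial_residue_count (2 * K) d M r - binomial_residue_count (2 * K) d M (r + int K)
      = (if even t then 1 else -1) *
          (\<Sum>b\<le>M. real (M choose b) * of_bool (b mod h = b0) * (-1)^(b div h))"
    unfolding binomial_residue_count_def sum_subtractf[symmetric] sum_distrib_left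
    by (intro sum.cong refl) (simp only: right_diff_distrib[symmetric] indicators(2), simp only: mult_ac)
  also have "\<dots> = (if even t then 1 else -1) * binomial_progression_altsum M h b0"
    using sum_binomial_residue_class[OF \<open>b0 < h\<close>, where w="\<lambda>i. (-1)^i" and M=M]
    unfolding binomial_progression_altsum_def by simp
  finally have "\<bar>binomial_residue_count (2 * K) d M r - binomial_residue_count (2 * K) d M (r + int K)\<bar>
      = \<bar>binomial_progression_altsum M h b0\<bar>"
    by simp
  with \<open>b0 < h\<close> sum show ?thesis
    by (rule that(2))
next
  case False
  then show ?thesis
    using binomial_residue_count_eq_0[OF assms(1,5)] that(1) by blast
qed

lemma exists_pow2_times_odd:
  fixes d :: nat
  assumes "0 < d"
  obtains v od where "d = 2^v * od" "odd od"
  using assms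
proof (induction d arbitrary: thesis rule: less_induct)
  case (less d)
  show ?case
  proof (cases "even d")
    case True
    moreover have "d div 2 < d" "0 < d div 2"
      using True less.prems(2) by auto
    ultimately obtain v od where "d div 2 = 2^v * od" "odd od"
      using less.IH by blast
    moreover have "d = 2 * (d div 2)"
      using \<open>even d\<close> by simp
    ultimately show ?thesis
      using less.prems(1)[of "Suc v" od] by simp
  next
    case False
    then show ?thesis
      using less.prems(1)[of 0 d] by simp
  qed
qed

lemma obtain_odd_scaling_pow2:
  fixes K d j :: nat
  assumes "K = 2^j" "1 \<le> d" "d < K"
  obtains e od where "d * 2^e = od * K" "odd od" "2^e \<le> K"
proof -
  obtain v od where d: "d = 2^v * od" and "odd od"
    using exists_pow2_times_odd[of d] \<open>1 \<le> d\<close> by auto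
  have "2^v \<le> d"
    using d \<open>odd od\<close> by (cases od) auto
  then have "v < j"
    using assms by (metis le_less_trans nat_power_less_imp_less pos2)
  then have "K = 2^v * 2^(j - v)"
    using assms(1) by (simp flip: power_add)
  then show thesis
    using that[of "j - v" od] d \<open>odd od\<close> by simp
qed

lemma additive_to_multiplicative_bound:
  fixes x y m B :: real
  assumes "x \<le> y + m" "B / real (2 * K) - m \<le> y" "m * (real K^2 + 20 * real K) \<le> 10 * B" "0 < K"
  shows "x \<le> (1 + 20 / K) * y"
proof -
  have "20 / K * (B / real (2 * K) - m) - m = (10 * B - m * (real K^2 + 20 * real K)) / real K^2"
    using \<open>0 < K\<close> by (simp add: field_simps power2_eq_square)
  also have "\<dots> \<ge> 0"
    using assms(3) by simp
  finally have "m \<le> 20 / K * (B / real (2 * K) - m)"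
    by simp
  also have "\<dots> \<le> 20 / K * y"
    using assms(2) by (intro mult_left_mono) simp_all
  finally show ?thesis
    using assms(1) by (simp add: algebra_simps)
qed

lemma binomial_residue_count_shift_le:
  fixes r :: int
  assumes K: "K = 2^j" and "1 \<le> d" "d < K"
    and central: "real (M choose (M div 2)) * (real K^2 + 20 * real K) \<le> 10 * 2^M"
  shows "binomial_residue_count (2 * K) d M r \<le> (1 + 20 / K) * binomial_residue_count (2 * K) d M (r + int K)"
proof -
  obtain e od where "d * 2^e = od * K" "odd od" "2^e \<le> K"
    using obtain_odd_scaling_pow2[OF assms(1-3)] .
  define h :: nat where "h = 2^e"
  have "d * h = od * K" "h \<le> K" "coprime h od" "0 < h" "0 < K"
    using \<open>d * 2^e = od * K\<close> \<open>2^e \<le> K\<close> \<open>odd od\<close> K unfolding h_def by simp_all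
  define G where "G = binomial_residue_count (2 * K) d M"
  define m where "m = real (M choose (M div 2))"
  show ?thesis
  proof (cases rule: binomial_residue_count_half_shift[OF \<open>d * h = od * K\<close> \<open>odd od\<close> \<open>coprime h od\<close> \<open>0 < K\<close> \<open>0 < h\<close>, of M r])
    case 1
    then show ?thesis
      by (simp add: binomial_residue_count_nonneg)
  next
    case (2 b0)
    have "2^M / K - m \<le> binomial_progression_sum M h b0"
    proof -
      have "(2::real)^M / K \<le> 2^M / h"
        using \<open>h \<le> K\<close> \<open>0 < h\<close> by (intro divide_left_mono) simp_all
      then show ?thesis
        using binomial_progression_sum_lower_bound[of b0 e M] \<open>b0 < h\<close>
        unfolding h_def m_def by simp
    qed
    moreover have "\<bar>binomial_progression_altsum M h b0\<bar> \<le> m"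
      unfolding m_def using \<open>0 < h\<close> by (intro abs_binomial_progression_altsum_le) simp
    ultimately have "G r \<le> G (r + int K) + m" and "2^M / (2 * K) - m \<le> G (r + int K)"
      using 2 unfolding G_def by (simp_all add: field_simps)
    then show ?thesis
      unfolding G_def using additive_to_multiplicative_bound[OF _ _ central[folded m_def] \<open>0 < K\<close>] by blast
  qed
qed

definition residue_count :: "nat \<Rightarrow> nat set \<Rightarrow> (nat \<Rightarrow> nat set) \<Rightarrow> int \<Rightarrow> real" where
  "residue_count W I A r = real (card {x \<in> PiE I A. int W dvd int (\<Sum>i\<in>I. x i) - r})"

definition shift_dominated :: "nat \<Rightarrow> real \<Rightarrow> (int \<Rightarrow> real) \<Rightarrow> bool" where
  "shift_dominated K c f \<longleftrightarrow> (\<forall>r. f r \<le> c * f (r + int K))"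

lemma residue_count_cong:
  "(\<And>i. i \<in> I \<Longrightarrow> A i = B i) \<Longrightarrow> residue_count W I A = residue_count W I B"
  unfolding residue_count_def using PiE_cong[of I A B] by simp

lemma residue_count_add_modulus: "residue_count W I A (r + int W) = residue_count W I A r"
proof -
  have "int W dvd s - (r + int W) \<longleftrightarrow> int W dvd s - r" for s
  proof -
    have "s - (r + int W) = s - r + (- 1) * int W"
      by simp
    then show ?thesis
      by (simp only: dvd_add_times_triv_right_iff)
  qed
  then show ?thesis
    unfolding residue_count_def by simp
qed

lemma residue_count_empty: "residue_count W {} A r = of_bool (int W dvd r)"
  by (simp add: residue_count_def)

lemma residue_count_insert:
  assumes "finite I" "i \<notin> I" "\<And>j. j \<in> insert i I \<Longrightarrow> finite (A j)"
  shows "residue_count W (insert i I) A r = (\<Sum>a\<in>A i. residue_count W I A (r - int a))"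
proof -
  define P :: "nat set \<Rightarrow> int \<Rightarrow> (nat \<Rightarrow> nat) \<Rightarrow> bool"
    where "P I' r' x \<longleftrightarrow> int W dvd int (\<Sum>j\<in>I'. x j) - r'" for I' r' x
  have count_eq_sum: "residue_count W I' A r' = (\<Sum>x\<in>PiE I' A. of_bool (P I' r' x))"
    if "finite (PiE I' A)" for I' r'
    unfolding residue_count_def P_def using that by (simp add: Collect_conj_eq Int_commute)
  have finite_PiE: "finite (PiE I A)" "finite (PiE (insert i I) A)"
    using assms by (auto intro!: finite_PiE)
  have upd: "P (insert i I) r (g(i := a)) \<longleftrightarrow> P I (r - int a) g" for g a
  proof -
    have "(\<Sum>j\<in>I. (g(i := a)) j) = (\<Sum>j\<in>I. g j)"
      using assms(2) by (intro sum.cong) auto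
    then show ?thesis
      unfolding P_def using assms(1,2) by (simp add: algebra_simps)
  qed
  have "residue_count W (insert i I) A r = (\<Sum>x\<in>PiE (insert i I) A. of_bool (P (insert i I) r x))"
    by (rule count_eq_sum[OF finite_PiE(2)])
  also have "\<dots> = (\<Sum>(a, g)\<in>A i \<times> PiE I A. of_bool (P (insert i I) r (g(i := a))))"
    unfolding PiE_insert_eq sum.reindex[OF inj_combinator[OF assms(2)]] by (simp add: comp_def case_prod_unfold)
  also have "\<dots> = (\<Sum>a\<in>A i. \<Sum>g\<in>PiE I A. of_bool (P I (r - int a) g))"
    unfolding upd by (rule sum.cartesian_product[symmetric])
  also have "\<dots> = (\<Sum>a\<in>A i. residue_count W I A (r - int a))"
    unfolding count_eq_sum[OF finite_PiE(1)] ..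
  finally show ?thesis .
qed

lemma shift_dominated_insert:
  assumes "shift_dominated K c (residue_count W I A)"
    and "finite I" "i \<notin> I" "\<And>j. j \<in> insert i I \<Longrightarrow> finite (A j)" "0 \<le> c"
  shows "shift_dominated K c (residue_count W (insert i I) A)"
  unfolding shift_dominated_def
proof
  fix r
  have "residue_count W (insert i I) A r = (\<Sum>a\<in>A i. residue_count W I A (r - int a))"
    using assms by (intro residue_count_insert)
  also have "\<dots> \<le> (\<Sum>a\<in>A i. c * residue_count W I A (r - int a + int K))"
    using assms(1) unfolding shift_dominated_def by (intro sum_mono) auto
  also have "\<dots> = c * (\<Sum>a\<in>A i. residue_count W I A (r + int K - int a))"
    by (simp add: sum_distrib_left algebra_simps)
  also have "\<dots> = c * residue_count W (insert i I) A (r + int K)"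
    using residue_count_insert[OF assms(2-4), where W=W and r="r + int K"] by simp
  finally show "residue_count W (insert i I) A r \<le> c * residue_count W (insert i I) A (r + int K)" .
qed

lemma shift_dominated_union:
  assumes "shift_dominated K c (residue_count W G A)"
    and "finite G" "finite H" "\<And>i. i \<in> G \<union> H \<Longrightarrow> finite (A i)" "0 \<le> c"
  shows "shift_dominated K c (residue_count W (G \<union> H) A)"
  using \<open>finite H\<close> assms(4)
proof (induction H rule: finite_induct)
  case empty
  then show ?case using assms(1) by simp
next
  case (insert i H)
  show ?case
  proof (cases "i \<in> G")
    case True
    then show ?thesis using insert by (simp add: insert_absorb)
  next
    case False
    then show ?thesis
      using insert assms(2,5) shift_dominated_insert[of K c W "G \<union> H" A i] by simp
  qed
qed

lemma residue_count_pairs: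
  assumes "finite G" "\<And>i. i \<in> G \<Longrightarrow> A i = {a i, a i + d}" "1 \<le> d"
  shows "residue_count W G A r = binomial_residue_count W d (card G) (r - int (\<Sum>i\<in>G. a i))"
  using assms
proof (induction G arbitrary: r rule: finite_induct)
  case empty
  then show ?case by (simp add: residue_count_empty binomial_residue_count_0)
next
  case (insert x F)
  have "residue_count W (insert x F) A r = (\<Sum>y\<in>A x. residue_count W F A (r - int y))"
    using insert.hyps insert.prems(1) by (intro residue_count_insert) auto
  also have "\<dots> = residue_count W F A (r - int (a x)) + residue_count W F A (r - int (a x + d))"
    using insert.prems by simp
  also have "\<dots> = binomial_residue_count W d (Suc (card F)) (r - int (\<Sum>i\<in>insert x F. a i))"
    using insert by (simp add: binomial_residue_count_Suc algebra_simps)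
  finally show ?case
    using insert by simp
qed

lemma shift_dominated_pair_block:
  assumes K: "K = 2^j"
    and "finite G" "card G = K^4" "\<And>i. i \<in> G \<Longrightarrow> A i = {a i, a i + d}" "1 \<le> d" "d < K"
  shows "shift_dominated K (1 + 20 / K) (residue_count (2 * K) G A)"
proof -
  have "2 \<le> K"
    using \<open>1 \<le> d\<close> \<open>d < K\<close> by simp
  then have "even K"
    using K by (cases j) auto
  define s where "s = int (\<Sum>i\<in>G. a i)"
  have count: "residue_count (2 * K) G A r = binomial_residue_count (2 * K) d (K^4) (r - s)" for r
    using residue_count_pairs[OF assms(2,4,5)] \<open>card G = K^4\<close> unfolding s_def by simp
  show ?thesis
    unfolding shift_dominated_def count
  proof
    fix r
    show "binomial_residue_count (2 * K) d (K^4) (r - s)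
        \<le> (1 + 20 / K) * binomial_residue_count (2 * K) d (K^4) (r + int K - s)"
      using binomial_residue_count_shift_le[OF K \<open>1 \<le> d\<close> \<open>d < K\<close>
          central_binomial_fourth_power_le[OF \<open>even K\<close> \<open>2 \<le> K\<close>], of "r - s"]
      by (simp add: algebra_simps)
  qed
qed

lemma sum_off_diagonal_pairs:
  fixes g :: "'a \<Rightarrow> real"
  assumes "finite S"
  shows "(\<Sum>a\<in>S. \<Sum>b\<in>S - {a}. g a + g b) = (2 * real (card S) - 2) * (\<Sum>a\<in>S. g a)"
proof -
  have "(\<Sum>a\<in>S. \<Sum>b\<in>S - {a}. g a + g b) = (\<Sum>a\<in>S. (real (card S) - 1) * g a + ((\<Sum>b\<in>S. g b) - g a))"
  proof (rule sum.cong[OF refl])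
    fix a assume "a \<in> S"
    then have "card S \<noteq> 0"
      using assms by auto
    then have "1 \<le> card S"
      by simp
    with \<open>a \<in> S\<close> show "(\<Sum>b\<in>S - {a}. g a + g b) = (real (card S) - 1) * g a + ((\<Sum>b\<in>S. g b) - g a)"
      using assms by (simp add: sum.distrib sum_diff1 card_Diff_singleton of_nat_diff)
  qed
  also have "\<dots> = (real (card S) - 1) * (\<Sum>a\<in>S. g a) + (real (card S) * (\<Sum>b\<in>S. g b) - (\<Sum>a\<in>S. g a))"
    by (simp only: sum.distrib sum_subtractf sum_distrib_left[symmetric] sum_constant)
  also have "\<dots> = (2 * real (card S) - 2) * (\<Sum>a\<in>S. g a)"
    by (simp add: algebra_simps)
  finally show ?thesis .
qed

lemma residue_count_pair_average:
  assumes "finite I" "i \<in> I" "\<And>j. j \<in> I \<Longrightarrow> finite (A j)"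
  shows "(2 * real (card (A i)) - 2) * residue_count W I A r
      = (\<Sum>a\<in>A i. \<Sum>b\<in>A i - {a}. residue_count W I (A(i := {a, b})) r)"
proof -
  define g where "g y = residue_count W (I - {i}) A (r - int y)" for y
  have I: "I = insert i (I - {i})" "i \<notin> I - {i}" "finite (I - {i})"
    using assms(1,2) by auto
  have restrict: "residue_count W (I - {i}) (A(i := B)) = residue_count W (I - {i}) A" for B
    by (rule residue_count_cong) simp
  have "residue_count W I (A(i := {a, b})) r = g a + g b" if "a \<noteq> b" for a b
    using residue_count_insert[OF I(3,2), of "A(i := {a, b})" W r] assms(3) I(1) that
    unfolding g_def restrict by (simp del: insert_Diff_single)
  then have "(\<Sum>a\<in>A i. \<Sum>b\<in>A i - {a}. residue_count W I (A(i := {a, b})) r)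
      = (\<Sum>a\<in>A i. \<Sum>b\<in>A i - {a}. g a + g b)"
    by (intro sum.cong refl) auto
  also have "\<dots> = (2 * real (card (A i)) - 2) * (\<Sum>a\<in>A i. g a)"
    using assms by (intro sum_off_diagonal_pairs) auto
  also have "(\<Sum>a\<in>A i. g a) = residue_count W I A r"
    using residue_count_insert[OF I(3,2), of A W r] assms(3) I(1) unfolding g_def
    by (simp del: insert_Diff_single)
  finally show ?thesis ..
qed

lemma shift_dominated_if_pairs_dominated:
  assumes "finite I" "i \<in> I" "\<And>j. j \<in> I \<Longrightarrow> finite (A j)" "2 \<le> card (A i)"
    and pairs: "\<And>a b. a \<in> A i \<Longrightarrow> b \<in> A i \<Longrightarrow> a \<noteq> b \<Longrightarrow>
      shift_dominated K c (residue_count W I (A(i := {a, b})))"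
  shows "shift_dominated K c (residue_count W I A)"
  unfolding shift_dominated_def
proof
  fix r
  define m where "m = 2 * real (card (A i)) - 2"
  have average: "m * residue_count W I A r'
      = (\<Sum>a\<in>A i. \<Sum>b\<in>A i - {a}. residue_count W I (A(i := {a, b})) r')" for r'
    unfolding m_def using assms(1-3) by (rule residue_count_pair_average)
  have "m * residue_count W I A r = (\<Sum>a\<in>A i. \<Sum>b\<in>A i - {a}. residue_count W I (A(i := {a, b})) r)"
    by (rule average)
  also have "\<dots> \<le> (\<Sum>a\<in>A i. \<Sum>b\<in>A i - {a}. c * residue_count W I (A(i := {a, b})) (r + int K))"
    using pairs unfolding shift_dominated_def by (intro sum_mono) auto
  also have "\<dots> = c * (m * residue_count W I A (r + int K))"
    by (simp add: average sum_distrib_left)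
  finally have "m * residue_count W I A r \<le> m * (c * residue_count W I A (r + int K))"
    by (simp add: algebra_simps)
  moreover have "0 < m"
    using assms(4) unfolding m_def by simp
  ultimately show "residue_count W I A r \<le> c * residue_count W I A (r + int K)"
    by simp
qed

lemma card_2_subset_eq_Min_plus_gap:
  fixes A :: "nat set"
  assumes "card A = 2" "A \<subseteq> {0..<K}"
  shows "A = {Min A, Min A + (Max A - Min A)}" "Max A - Min A \<in> {1..<K}"
proof -
  obtain x y where xy: "A = {x, y}" "x \<noteq> y"
    using assms(1) by (meson card_2_iff)
  moreover have "x < K" "y < K"
    using assms(2) unfolding xy(1) by simp_all
  ultimately show "A = {Min A, Min A + (Max A - Min A)}" "Max A - Min A \<in> {1..<K}"
    by (cases "x < y"; auto simp: min_def max_def insert_commute)+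
qed

lemma obtain_pairs_with_common_difference:
  assumes "finite G0" "\<And>i. i \<in> G0 \<Longrightarrow> A i \<subseteq> {0..<K} \<and> card (A i) = 2"
    and "0 < K" "0 < N" "K * N \<le> card G0"
  obtains d G a where "1 \<le> d" "d < K" "G \<subseteq> G0" "card G = N" "\<And>i. i \<in> G \<Longrightarrow> A i = {a i, a i + d}"
proof -
  define gap where "gap i = Max (A i) - Min (A i)" for i
  have gap: "gap \<in> G0 \<rightarrow> {1..<K}"
    using card_2_subset_eq_Min_plus_gap(2) assms(2) unfolding gap_def by blast
  have "G0 \<noteq> {}"
    using assms(3-5) by auto
  then have "{1..<K} \<noteq> {}"
    using gap by blast
  then obtain d where d: "d \<in> {1..<K}" "card G0 \<le> card (gap -` {d} \<inter> G0) * card {1..<K}"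
    using pigeonhole_card[OF gap assms(1)] by auto
  have "N \<le> card (gap -` {d} \<inter> G0)"
  proof (rule ccontr)
    assume "\<not> ?thesis"
    then have "card (gap -` {d} \<inter> G0) * card {1..<K} < N * K"
      using \<open>0 < K\<close> by (intro le_less_trans[OF mult_le_mono2 mult_less_mono1]) auto
    then show False
      using d(2) assms(5) by (simp add: mult.commute)
  qed
  then obtain G where G: "G \<subseteq> gap -` {d} \<inter> G0" "card G = N"
    by (meson obtain_subset_with_card_n)
  have "A i = {Min (A i), Min (A i) + d}" if "i \<in> G" for i
    using card_2_subset_eq_Min_plus_gap(1)[of "A i" K] assms(2)[of i] G(1) that
    unfolding gap_def by auto
  then show ?thesis
    using that[of d G "\<lambda>i. Min (A i)"] G d(1) by auto
qed

lemma shift_dominated_residue_count_card_le_2: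
  fixes K j :: nat
  assumes K: "K = 2^j" and "finite I" and A: "\<forall>i\<in>I. A i \<subseteq> {0..<K}"
    and many: "K^5 \<le> card {i\<in>I. 2 \<le> card (A i)}" and small: "\<forall>i\<in>I. card (A i) \<le> 2"
  shows "shift_dominated K (1 + 20 / K) (residue_count (2 * K) I A)"
proof -
  have finite: "finite (A i)" if "i \<in> I" for i
    using A that finite_subset by blast
  define G0 where "G0 = {i\<in>I. 2 \<le> card (A i)}"
  have "finite G0" "G0 \<subseteq> I"
    using \<open>finite I\<close> unfolding G0_def by auto
  have pairs: "A i \<subseteq> {0..<K} \<and> card (A i) = 2" if "i \<in> G0" for i
    using that A small unfolding G0_def by fastforce
  have "K * K^4 \<le> card G0"
    using many unfolding G0_def by (simp add: power_Suc[symmetric] del: power_Suc)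
  moreover have "0 < K" "0 < K^4"
    using K by simp_all
  ultimately obtain d G a where G: "1 \<le> d" "d < K" "G \<subseteq> G0" "card G = K^4"
    "\<And>i. i \<in> G \<Longrightarrow> A i = {a i, a i + d}"
    using obtain_pairs_with_common_difference[of G0 A K "K^4", OF \<open>finite G0\<close> pairs] by blast
  have "finite G" "G \<subseteq> I"
    using G(3) \<open>finite G0\<close> \<open>G0 \<subseteq> I\<close> finite_subset by blast+
  have "shift_dominated K (1 + 20 / K) (residue_count (2 * K) (G \<union> (I - G)) A)"
  proof (rule shift_dominated_union)
    show "shift_dominated K (1 + 20 / K) (residue_count (2 * K) G A)"
      using shift_dominated_pair_block[OF K \<open>finite G\<close> G(4,5,1,2)] .
  qed (use \<open>finite G\<close> \<open>finite I\<close> \<open>G \<subseteq> I\<close> finite in auto)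
  moreover have "G \<union> (I - G) = I"
    using \<open>G \<subseteq> I\<close> by auto
  ultimately show ?thesis
    by simp
qed

lemma shift_dominated_residue_count:
  fixes K j :: nat
  assumes K: "K = 2^j" and "finite I"
  shows "\<forall>i\<in>I. A i \<subseteq> {0..<K} \<Longrightarrow> K^5 \<le> card {i\<in>I. 2 \<le> card (A i)} \<Longrightarrow>
    shift_dominated K (1 + 20 / K) (residue_count (2 * K) I A)"
proof (induction "\<Sum>i\<in>I. card (A i)" arbitrary: A rule: less_induct)
  case (less A)
  have finite: "finite (A i)" if "i \<in> I" for i
    using less.prems(1) that finite_subset by blast
  consider i where "i \<in> I" "3 \<le> card (A i)" | "\<forall>i\<in>I. card (A i) \<le> 2"
    by force
  then show ?case
  proof cases
    case 1
    show ?thesis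
    proof (rule shift_dominated_if_pairs_dominated[OF \<open>finite I\<close> \<open>i \<in> I\<close> finite])
      show "2 \<le> card (A i)" using 1 by simp
    next
      fix a b assume ab: "a \<in> A i" "b \<in> A i" "a \<noteq> b"
      show "shift_dominated K (1 + 20 / K) (residue_count (2 * K) I (A(i := {a, b})))"
      proof (rule less.hyps)
        have "(\<Sum>j\<in>I. card ((A(i := {a, b})) j)) = 2 + (\<Sum>j\<in>I - {i}. card (A j))"
          using \<open>finite I\<close> \<open>i \<in> I\<close> ab(3) by (simp add: sum.remove)
        also have "\<dots> < (\<Sum>j\<in>I. card (A j))"
          using \<open>finite I\<close> \<open>i \<in> I\<close> 1(2) by (simp add: sum.remove)
        finally show "(\<Sum>j\<in>I. card ((A(i := {a, b})) j)) < (\<Sum>j\<in>I. card (A j))" .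
        have "a < K" "b < K"
          using less.prems(1) ab(1,2) \<open>i \<in> I\<close> by fastforce+
        then show "\<forall>j\<in>I. (A(i := {a, b})) j \<subseteq> {0..<K}"
          using less.prems(1) by auto
        have "{j\<in>I. 2 \<le> card ((A(i := {a, b})) j)} = {j\<in>I. 2 \<le> card (A j)}"
          using ab 1 by auto
        then show "K^5 \<le> card {j\<in>I. 2 \<le> card ((A(i := {a, b})) j)}"
          using less.prems(2) by simp
      qed
    qed
  next
    case 2
    then show ?thesis
      using shift_dominated_residue_count_card_le_2[OF K \<open>finite I\<close> less.prems] by simp
  qed
qed

lemma mod_double_div_eq_iff_dvd:
  fixes S k v :: nat
  assumes "0 < k" "v < 2"
  shows "S mod k = 0 \<and> S mod (2 * k) div k = v \<longleftrightarrow> int (2 * k) dvd int S - int (v * k)"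
proof -
  have "S mod k = 0 \<and> S mod (2 * k) div k = v \<longleftrightarrow> S mod (2 * k) = v * k"
  proof -
    have "S mod (2 * k) mod k = S mod k"
      by (simp add: mod_mod_cancel)
    then show ?thesis
      using assms div_mult_mod_eq[of "S mod (2 * k)" k] by (auto simp: less_2_cases_iff)
  qed
  also have "\<dots> \<longleftrightarrow> int (S mod (2 * k)) = int (v * k mod (2 * k))"
    using assms by (simp only: of_nat_eq_iff mod_less mult_less_cancel2 zero_less_numeral)
  also have "\<dots> \<longleftrightarrow> int S mod int (2 * k) = int (v * k) mod int (2 * k)"
    by (simp only: of_nat_mod)
  also have "\<dots> \<longleftrightarrow> int (2 * k) dvd int S - int (v * k)"
    by (rule mod_eq_dvd_iff)
  finally show ?thesis .
qed

lemma card_level_set_eq_residue_count: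
  assumes "0 < k" "v < 2" "\<forall>i<n. A i \<subseteq> {0..<k}"
  shows "real (card (funF n k -` {v} \<inter> domD n k \<inter> rect n A))
    = residue_count (2 * k) {0..<n} A (int (v * k))"
proof -
  have "rect n A \<subseteq> cube n k"
    unfolding rect_def cube_def using assms(3) by (intro PiE_mono) auto
  then have "x \<in> funF n k -` {v} \<inter> domD n k \<inter> rect n A \<longleftrightarrow>
      x \<in> PiE {0..<n} A \<and> (\<Sum>i\<in>{0..<n}. x i) mod k = 0 \<and> (\<Sum>i\<in>{0..<n}. x i) mod (2 * k) div k = v" for x
    unfolding funF_def domD_def rect_def atLeast0LessThan by auto
  then have "funF n k -` {v} \<inter> domD n k \<inter> rect n A
      = {x \<in> PiE {0..<n} A. int (2 * k) dvd int (\<Sum>i\<in>{0..<n}. x i) - int (v * k)}"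
    unfolding mod_double_div_eq_iff_dvd[OF assms(1,2)] by blast
  then show ?thesis
    unfolding residue_count_def by simp
qed

lemma of_nat_sixth_power_powr:
  assumes "0 < k"
  shows "real (k^6) powr (a / 6) = real k powr a"
proof -
  have "real (k^6) powr (a / 6) = (real k powr 6) powr (a / 6)"
    using assms by (simp add: powr_realpow)
  also have "\<dots> = real k powr a"
    by (simp only: powr_powr) simp
  finally show ?thesis .
qed

lemma bias_at_most_if_shift_dominated:
  assumes "0 < k" "\<forall>i<n. A i \<subseteq> {0..<k}"
    and "shift_dominated k (1 + \<delta>) (residue_count (2 * k) {0..<n} A)"
  shows "bias_at_most (funF n k) (domD n k) (rect n A) \<delta>"
proof -
  define R where "R = residue_count (2 * k) {0..<n} A"
  have "R (int k + int k) = R 0"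
    unfolding R_def using residue_count_add_modulus[of "2 * k" "{0..<n}" A 0] by simp
  then have "R 0 \<le> (1 + \<delta>) * R (int k)" "R (int k) \<le> (1 + \<delta>) * R 0"
    using assms(3) unfolding R_def[symmetric] shift_dominated_def by (metis add_0)+
  moreover have "real (card (funF n k -` {0} \<inter> domD n k \<inter> rect n A)) = R 0"
    "real (card (funF n k -` {1} \<inter> domD n k \<inter> rect n A)) = R (int k)"
    unfolding R_def using card_level_set_eq_residue_count[OF assms(1) _ assms(2), of 0]
      card_level_set_eq_residue_count[OF assms(1) _ assms(2), of 1] by simp_all
  ultimately show ?thesis
    unfolding bias_at_most_def by simp
qed

theorem lemma3:
  shows "\<exists>C::real. \<forall>n k :: nat. \<forall>A :: nat \<Rightarrow> nat set.
           (\<exists>j::nat. k = 2 ^ j) \<longrightarrow> n = k ^ 6 \<longrightarrow>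
           (\<forall>i<n. A i \<subseteq> {0..<k}) \<longrightarrow>
           real (card {i \<in> {0..<n}. card (A i) \<ge> 2}) \<ge> real n powr (5/6) \<longrightarrow>
           bias_at_most (funF n k) (domD n k) (rect n A) (C * real n powr (-1/6))"
proof (intro exI[of _ 20] allI impI)
  fix n k :: nat and A :: "nat \<Rightarrow> nat set"
  assume "\<exists>j. k = 2^j" and n: "n = k^6" and A: "\<forall>i<n. A i \<subseteq> {0..<k}"
    and many: "real n powr (5/6) \<le> real (card {i \<in> {0..<n}. card (A i) \<ge> 2})"
  then obtain j where K: "k = 2^j"
    by blast
  then have "0 < k"
    by simp
  have "real n powr (5/6) = real (k^5)"
    using of_nat_sixth_power_powr[OF \<open>0 < k\<close>, of 5] \<open>0 < k\<close> unfolding n by (simp add: powr_realpow)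
  with many have "k^5 \<le> card {i \<in> {0..<n}. 2 \<le> card (A i)}"
    by (simp only: of_nat_le_iff)
  then have "shift_dominated k (1 + 20 / k) (residue_count (2 * k) {0..<n} A)"
    using shift_dominated_residue_count[OF K] A by simp
  moreover have "20 * real n powr (-1/6) = 20 / k"
    using of_nat_sixth_power_powr[OF \<open>0 < k\<close>, of "-1"] \<open>0 < k\<close> unfolding n by (simp add: powr_minus_divide)
  ultimately show "bias_at_most (funF n k) (domD n k) (rect n A) (20 * real n powr (-1/6))"
    using bias_at_most_if_shift_dominated[OF \<open>0 < k\<close> A] by simp
qed

end
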